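(* Let $\mathcal{X}=\{1,\ldots,n\}$, let $p$ be a probability vector on $\mathcal{X}$ with all entries positive (the prior of $X$), with entries in non-increasing order $p_{[1]}\geq\cdots\geq p_{[n]}$, and let $k<n$ be a positive integer. Then the maximum over all feasible channels of the posterior guesswork entropy $H(X\mid Y)=\sum_{y:\,p(y)>0}p(y)\sum_{i=1}^{n}i\,(p_{X\mid y})_{[i]}$ equals $$\min_{1\leq j\leq k}\Big\{\sum_{i=1}^{j-1}i\,p_{[i]}+\Big(1-\sum_{i=1}^{j-1}p_{[i]}\Big)\frac{k+j}{2}\Big\}.$$
   Context: $q_{[i]}$ denotes the $i$-th largest entry of a vector $q$, and $p_{X\mid y}=(p(x\mid y))_{x\in\mathcal{X}}$. A channel is a discrete output set $\mathcal{Y}$ with conditional probabilities $p(y\mid x)\geq0$, $\sum_y p(y\mid x)=1$; $Y$ is its output when the input is $X\sim p$, with $p(y)=\sum_x p(x)p(y\mid x)$ and $p(x\mid y)=p(x)p(y\mid x)/p(y)$. The pre-image of $y$ is $\{x:p(y\mid x)>0\}$; the channel is feasible if every pre-image has at most $k$ elements. *)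

theory Defs
  imports "HOL-Analysis.Analysis"
begin

text \<open>Inputs are X = {1..n}; vectors on X are functions nat => real restricted to {1..n}.
  A channel is W :: nat => nat => real with W x y = p(y|x); the (discrete) output set is nat.\<close>

definition desc_entry :: "nat \<Rightarrow> (nat \<Rightarrow> real) \<Rightarrow> nat \<Rightarrow> real" where
  "desc_entry n q i = rev (sort (map q [1..<Suc n])) ! (i - 1)"

definition guesswork :: "nat \<Rightarrow> (nat \<Rightarrow> real) \<Rightarrow> real" where
  "guesswork n q = (\<Sum>i=1..n. real i * desc_entry n q i)"

definition is_channel :: "nat \<Rightarrow> (nat \<Rightarrow> nat \<Rightarrow> real) \<Rightarrow> bool" where
  "is_channel n W \<longleftrightarrow> (\<forall>x\<in>{1..n}. (\<forall>y. W x y \<ge> 0) \<and> ((\<lambda>y. W x y) has_sum 1) UNIV)"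

definition preimage :: "nat \<Rightarrow> (nat \<Rightarrow> nat \<Rightarrow> real) \<Rightarrow> nat \<Rightarrow> nat set" where
  "preimage n W y = {x\<in>{1..n}. W x y > 0}"

definition feasible :: "nat \<Rightarrow> nat \<Rightarrow> (nat \<Rightarrow> nat \<Rightarrow> real) \<Rightarrow> bool" where
  "feasible n k W \<longleftrightarrow> is_channel n W \<and> (\<forall>y. card (preimage n W y) \<le> k)"

definition out_prob :: "nat \<Rightarrow> (nat \<Rightarrow> real) \<Rightarrow> (nat \<Rightarrow> nat \<Rightarrow> real) \<Rightarrow> nat \<Rightarrow> real" where
  "out_prob n p W y = (\<Sum>x=1..n. p x * W x y)"

definition posterior :: "nat \<Rightarrow> (nat \<Rightarrow> real) \<Rightarrow> (nat \<Rightarrow> nat \<Rightarrow> real) \<Rightarrow> nat \<Rightarrow> nat \<Rightarrow> real" where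
  "posterior n p W y x = p x * W x y / out_prob n p W y"

definition cond_guesswork :: "nat \<Rightarrow> (nat \<Rightarrow> real) \<Rightarrow> (nat \<Rightarrow> nat \<Rightarrow> real) \<Rightarrow> real" where
  "cond_guesswork n p W =
     infsum (\<lambda>y. if out_prob n p W y > 0
                 then out_prob n p W y * guesswork n (posterior n p W y) else 0) UNIV"

definition bound_term :: "nat \<Rightarrow> nat \<Rightarrow> (nat \<Rightarrow> real) \<Rightarrow> nat \<Rightarrow> real" where
  "bound_term n k p j =
     (\<Sum>i=1..j-1. real i * desc_entry n p i)
     + (1 - (\<Sum>i=1..j-1. desc_entry n p i)) * ((real k + real j) / 2)"

end

theory Submission
  imports Defs
begin

(* Let rank(x) sort the vector q decreasingly; the guesswork of q is then the sum of rank(x) q(x),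
   the least value of the sum of pos(x) q(x) over all injective assignments of guess positions pos
   to the support of q.

   Upper bound: fix j <= k and a feasible channel. In the column of an output y, guess the inputs of
   prior rank below j at their prior rank and let the other (at most k - j + 1) inputs of the column
   cycle through the free positions among 1..k. Averaged over the cycle, each of them is guessed at
   mean position at most (k + j)/2; summing over the outputs gives the j-th term of the minimum.

   Achievability: for the least j at which the tail mass r = p_[j] + ... + p_[n] is at least
   (k - j + 1) p_[j], every tail entry is at most r/(k - j + 1) and every head entry at least that.
   The tail of p is then a nonnegative combination of uniform vectors on (k - j + 1)-subsets
   (a point of a hypersimplex). Giving every such block its own output, which also shows the head
   of p, yields a feasible channel whose columns are sorted as the prior on the head, followed by a
   flat block at positions j..k, so the averaged bound is attained. *)

section \<open>Guesswork and sorting ranks\<close>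

definition is_sorting_rank :: "nat \<Rightarrow> (nat \<Rightarrow> real) \<Rightarrow> (nat \<Rightarrow> nat) \<Rightarrow> bool" where
  "is_sorting_rank n q \<psi> \<longleftrightarrow> bij_betw \<psi> {1..n} {1..n} \<and>
     (\<forall>x\<in>{1..n}. \<forall>y\<in>{1..n}. \<psi> x < \<psi> y \<longrightarrow> q y \<le> q x)"

lemma sorting_rank_exists:
  obtains \<psi> where "is_sorting_rank n q \<psi>" and "\<forall>x\<in>{1..n}. desc_entry n q (\<psi> x) = q x"
proof -
  define zs where "zs = rev (sort_key q [1..<Suc n])"
  have zs: "distinct zs" "set zs = {1..n}" "length zs = n"
    by (auto simp: zs_def)
  have "sort (map q [1..<Suc n]) = map q (sort_key q [1..<Suc n])"
    by (rule properties_for_sort) simp_all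
  then have "rev (sort (map q [1..<Suc n])) = map q zs"
    by (simp add: zs_def rev_map)
  then have desc: "desc_entry n q i = q (zs ! (i - 1))" if "i \<in> {1..n}" for i
  proof -
    have "i - 1 < length zs" using that zs(3) by auto
    then show ?thesis using \<open>rev _ = map q zs\<close> by (simp add: desc_entry_def)
  qed
  have antitone: "q (zs ! j) \<le> q (zs ! i)" if "i \<le> j" "j < n" for i j
    using sorted_rev_nth_mono[of "map q zs" i j] that zs by (simp add: zs_def rev_map)
  define \<tau> where "\<tau> i = zs ! (i - 1)" for i
  have "bij_betw (\<lambda>i. i - 1) {1..n} {..<n}"
    by (rule bij_betwI[where g = Suc]) auto
  then have \<tau>: "bij_betw \<tau> {1..n} {1..n}"
    unfolding \<tau>_def using bij_betw_nth[OF zs(1) _ zs(2)[symmetric]] zs(3)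
    by (auto intro: bij_betw_trans[unfolded comp_def])
  define \<psi> where "\<psi> = the_inv_into {1..n} \<tau>"
  have \<psi>: "bij_betw \<psi> {1..n} {1..n}"
    unfolding \<psi>_def by (rule bij_betw_the_inv_into[OF \<tau>])
  have \<tau>\<psi>: "\<tau> (\<psi> x) = x" if "x \<in> {1..n}" for x
    unfolding \<psi>_def using f_the_inv_into_f_bij_betw[OF \<tau>] that by auto
  have \<psi>_range: "\<psi> x \<in> {1..n}" if "x \<in> {1..n}" for x
    using \<psi> that bij_betwE by blast
  show thesis
  proof
    show "is_sorting_rank n q \<psi>"
      unfolding is_sorting_rank_def
    proof (intro conjI \<psi> ballI impI)
      fix x y assume x: "x \<in> {1..n}" and y: "y \<in> {1..n}" and "\<psi> x < \<psi> y"
      then have "q (\<tau> (\<psi> y)) \<le> q (\<tau> (\<psi> x))"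
        using antitone[of "\<psi> x - 1" "\<psi> y - 1"] \<psi>_range[OF x] \<psi>_range[OF y]
        unfolding \<tau>_def by auto
      then show "q y \<le> q x" using \<tau>\<psi>[OF x] \<tau>\<psi>[OF y] by simp
    qed
    show "\<forall>x\<in>{1..n}. desc_entry n q (\<psi> x) = q x"
      using desc \<psi>_range \<tau>\<psi> unfolding \<tau>_def by simp
  qed
qed

lemma bij_betw_filter:
  assumes "bij_betw \<psi> A B"
  shows "bij_betw \<psi> {x\<in>A. P (\<psi> x)} {i\<in>B. P i}"
  by (rule bij_betw_subset[OF assms]) (use assms in \<open>auto simp: bij_betw_def\<close>)

lemma sum_le_sum_of_dominating_set:
  fixes q :: "'a \<Rightarrow> real"
  assumes fin: "finite A" "finite B" and card: "card B \<le> card A"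
    and nonneg: "\<And>x. x \<in> A \<union> B \<Longrightarrow> 0 \<le> q x"
    and dominates: "\<And>x y. x \<in> A - B \<Longrightarrow> y \<in> B - A \<Longrightarrow> q y \<le> q x"
  shows "sum q B \<le> sum q A"
proof (cases "B - A = {}")
  case True
  then show ?thesis using nonneg by (intro sum_mono2[OF fin(1)]) auto
next
  case False
  define c where "c = Max (q ` (B - A))"
  have c: "c \<in> q ` (B - A)" unfolding c_def using False fin by (intro Max_in) auto
  have "card A = card (A \<inter> B) + card (A - B)" "card B = card (B \<inter> A) + card (B - A)"
    using fin by (simp_all add: card_Int_Diff)
  then have card_diff: "card (B - A) \<le> card (A - B)" using card by (simp add: Int_commute)
  have "sum q B = sum q (A \<inter> B) + sum q (B - A)"
    using fin by (metis Int_commute sum.Int_Diff)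
  also have "\<dots> \<le> sum q (A \<inter> B) + card (B - A) * c"
    using sum_bounded_above[of "B - A" q c] fin unfolding c_def by simp
  also have "\<dots> \<le> sum q (A \<inter> B) + card (A - B) * c"
    using card_diff c nonneg by (auto intro: mult_right_mono)
  also have "\<dots> \<le> sum q (A \<inter> B) + sum q (A - B)"
    using sum_bounded_below[of "A - B" c q] c dominates by auto
  also have "\<dots> = sum q A" using fin by (metis sum.Int_Diff)
  finally show ?thesis .
qed

lemma layer_cake_sum:
  fixes q :: "'a \<Rightarrow> real" and f :: "'a \<Rightarrow> nat"
  assumes "finite X"
  shows "(\<Sum>x\<in>X. real (card {t\<in>{1..n}. t \<le> f x}) * q x) = (\<Sum>t=1..n. \<Sum>x\<in>{x\<in>X. t \<le> f x}. q x)"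
proof -
  have "(\<Sum>x\<in>X. real (card {t\<in>{1..n}. t \<le> f x}) * q x)
      = (\<Sum>x\<in>X. \<Sum>t=1..n. if t \<le> f x then q x else 0)"
    by (simp add: sum.inter_filter[symmetric])
  also have "\<dots> = (\<Sum>t=1..n. \<Sum>x\<in>{x\<in>X. t \<le> f x}. q x)"
    using assms by (subst sum.swap) (simp add: sum.inter_filter)
  finally show ?thesis .
qed

lemma sorting_rank_tail_le:
  assumes \<psi>: "is_sorting_rank n q \<psi>" and nonneg: "\<forall>x\<in>{1..n}. 0 \<le> q x"
    and \<phi>_pos: "\<forall>x\<in>{1..n}. 1 \<le> \<phi> x" and \<phi>_inj: "inj_on \<phi> {x\<in>{1..n}. q x \<noteq> 0}"
    and t: "t \<in> {1..n}"
  shows "(\<Sum>x\<in>{x\<in>{1..n}. t \<le> \<psi> x}. q x) \<le> (\<Sum>x\<in>{x\<in>{1..n}. t \<le> \<phi> x}. q x)"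
proof -
  define B where "B = {x\<in>{1..n}. t \<le> \<psi> x}"
  define A where "A = {x\<in>{1..n}. t \<le> \<phi> x}"
  define Z where "Z = {x\<in>{1..n}. q x = 0}"
  have "bij_betw \<psi> {1..n} {1..n}" using \<psi> by (simp add: is_sorting_rank_def)
  then have "card B = card {i\<in>{1..n}. t \<le> i}"
    unfolding B_def by (rule bij_betw_same_card[OF bij_betw_filter])
  also have "{i\<in>{1..n}. t \<le> i} = {t..n}" using t by auto
  finally have card_B: "card B = n + 1 - t" by simp
  have "card ({1..n} - (A \<union> Z)) \<le> card {1..<t}"
  proof (rule card_inj_on_le)
    show "inj_on \<phi> ({1..n} - (A \<union> Z))"
      by (rule inj_on_subset[OF \<phi>_inj]) (auto simp: A_def Z_def)
    show "\<phi> ` ({1..n} - (A \<union> Z)) \<subseteq> {1..<t}" using \<phi>_pos by (auto simp: A_def Z_def)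
  qed simp
  moreover have "card ({1..n} - (A \<union> Z)) = n - card (A \<union> Z)"
    by (subst card_Diff_subset) (auto simp: A_def Z_def)
  moreover have "card (A \<union> Z) \<le> card {1..n}"
    by (rule card_mono) (auto simp: A_def Z_def)
  ultimately have card_le: "card B \<le> card (A \<union> Z)" using card_B t by auto
  have "sum q B \<le> sum q (A \<union> Z)"
  proof (rule sum_le_sum_of_dominating_set[OF _ _ card_le])
    show "finite (A \<union> Z)" "finite B" by (auto simp: A_def B_def Z_def)
    show "0 \<le> q x" if "x \<in> A \<union> Z \<union> B" for x
      using that nonneg by (auto simp: A_def B_def Z_def)
    show "q y \<le> q x" if "x \<in> A \<union> Z - B" "y \<in> B - (A \<union> Z)" for x y
    proof -
      have "x \<in> {1..n}" "y \<in> {1..n}" "\<psi> x < \<psi> y"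
        using that by (auto simp: A_def B_def Z_def)
      then show ?thesis using \<psi> by (simp add: is_sorting_rank_def)
    qed
  qed
  also have "sum q (A \<union> Z) = sum q A"
    by (rule sum.mono_neutral_right) (auto simp: A_def Z_def)
  finally show ?thesis unfolding A_def B_def .
qed

lemma sorting_rank_minimal:
  assumes \<psi>: "is_sorting_rank n q \<psi>" and nonneg: "\<forall>x\<in>{1..n}. 0 \<le> q x"
    and \<phi>_pos: "\<forall>x\<in>{1..n}. 1 \<le> \<phi> x" and \<phi>_inj: "inj_on \<phi> {x\<in>{1..n}. q x \<noteq> 0}"
  shows "(\<Sum>x=1..n. real (\<psi> x) * q x) \<le> (\<Sum>x=1..n. real (\<phi> x) * q x)"
proof -
  have \<psi>_layers: "real (\<psi> x) = card {t\<in>{1..n}. t \<le> \<psi> x}" if "x \<in> {1..n}" for x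
  proof -
    have "\<psi> x \<le> n" using \<psi> that by (auto simp: is_sorting_rank_def bij_betw_def)
    then have "{t\<in>{1..n}. t \<le> \<psi> x} = {1..\<psi> x}" by auto
    then show ?thesis by simp
  qed
  have \<phi>_layers: "card {t\<in>{1..n}. t \<le> \<phi> x} * q x \<le> real (\<phi> x) * q x" if "x \<in> {1..n}" for x
  proof -
    have "card {t\<in>{1..n}. t \<le> \<phi> x} \<le> card {1..\<phi> x}" by (rule card_mono) auto
    then show ?thesis using nonneg that by (intro mult_right_mono) auto
  qed
  have "(\<Sum>x=1..n. real (\<psi> x) * q x) = (\<Sum>x=1..n. card {t\<in>{1..n}. t \<le> \<psi> x} * q x)"
    using \<psi>_layers by simp
  also have "\<dots> = (\<Sum>t=1..n. \<Sum>x\<in>{x\<in>{1..n}. t \<le> \<psi> x}. q x)"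
    by (rule layer_cake_sum) simp
  also have "\<dots> \<le> (\<Sum>t=1..n. \<Sum>x\<in>{x\<in>{1..n}. t \<le> \<phi> x}. q x)"
    by (intro sum_mono sorting_rank_tail_le[OF assms])
  also have "\<dots> = (\<Sum>x=1..n. card {t\<in>{1..n}. t \<le> \<phi> x} * q x)"
    by (rule layer_cake_sum[symmetric]) simp
  also have "\<dots> \<le> (\<Sum>x=1..n. real (\<phi> x) * q x)"
    by (intro sum_mono \<phi>_layers)
  finally show ?thesis .
qed

lemma guesswork_sorting_rank_exists:
  obtains \<psi> where "is_sorting_rank n q \<psi>" and "guesswork n q = (\<Sum>x=1..n. real (\<psi> x) * q x)"
proof -
  obtain \<psi> where \<psi>: "is_sorting_rank n q \<psi>" and desc: "\<forall>x\<in>{1..n}. desc_entry n q (\<psi> x) = q x"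
    using sorting_rank_exists[of n q] by blast
  have "guesswork n q = (\<Sum>x=1..n. real (\<psi> x) * desc_entry n q (\<psi> x))"
    unfolding guesswork_def
    by (rule sum.reindex_bij_betw[symmetric]) (use \<psi> in \<open>simp add: is_sorting_rank_def\<close>)
  also have "\<dots> = (\<Sum>x=1..n. real (\<psi> x) * q x)" using desc by simp
  finally show thesis using \<psi> that by blast
qed

lemma guesswork_le_sum_positions:
  assumes "\<forall>x\<in>{1..n}. 0 \<le> q x" "\<forall>x\<in>{1..n}. 1 \<le> \<phi> x" "inj_on \<phi> {x\<in>{1..n}. q x \<noteq> 0}"
  shows "guesswork n q \<le> (\<Sum>x=1..n. real (\<phi> x) * q x)"
proof -
  obtain \<psi> where "is_sorting_rank n q \<psi>" "guesswork n q = (\<Sum>x=1..n. real (\<psi> x) * q x)"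
    by (rule guesswork_sorting_rank_exists)
  then show ?thesis using sorting_rank_minimal[OF _ assms] by simp
qed

lemma sorting_rank_positions:
  assumes "is_sorting_rank n q \<psi>"
  shows "\<forall>x\<in>{1..n}. 1 \<le> \<psi> x" and "inj_on \<psi> {x\<in>{1..n}. q x \<noteq> 0}"
proof -
  have \<psi>: "bij_betw \<psi> {1..n} {1..n}" using assms by (simp add: is_sorting_rank_def)
  then show "\<forall>x\<in>{1..n}. 1 \<le> \<psi> x" using bij_betwE by fastforce
  show "inj_on \<psi> {x\<in>{1..n}. q x \<noteq> 0}"
    using bij_betw_imp_inj_on[OF \<psi>] by (rule inj_on_subset) auto
qed

lemma guesswork_eq_sum_sorting_rank:
  assumes \<psi>: "is_sorting_rank n q \<psi>" and nonneg: "\<forall>x\<in>{1..n}. 0 \<le> q x"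
  shows "guesswork n q = (\<Sum>x=1..n. real (\<psi> x) * q x)"
proof -
  obtain \<psi>' where \<psi>': "is_sorting_rank n q \<psi>'" and eq: "guesswork n q = (\<Sum>x=1..n. real (\<psi>' x) * q x)"
    using guesswork_sorting_rank_exists by blast
  show ?thesis
    using sorting_rank_minimal[OF \<psi> nonneg sorting_rank_positions[OF \<psi>']]
      sorting_rank_minimal[OF \<psi>' nonneg sorting_rank_positions[OF \<psi>]] eq
    by linarith
qed

lemma guesswork_nonneg:
  assumes "\<forall>x\<in>{1..n}. 0 \<le> q x"
  shows "0 \<le> guesswork n q"
proof -
  obtain \<psi> where "guesswork n q = (\<Sum>x=1..n. real (\<psi> x) * q x)"
    using guesswork_sorting_rank_exists by blast
  then show ?thesis using assms by (auto intro!: sum_nonneg)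
qed

lemma guesswork_eq_0:
  assumes "\<forall>x\<in>{1..n}. q x = 0"
  shows "guesswork n q = 0"
proof -
  obtain \<psi> where "guesswork n q = (\<Sum>x=1..n. real (\<psi> x) * q x)"
    using guesswork_sorting_rank_exists by blast
  then show ?thesis using assms by simp
qed

lemma guesswork_scale:
  assumes nonneg: "\<forall>x\<in>{1..n}. 0 \<le> q x" and "0 \<le> c"
  shows "guesswork n (\<lambda>x. c * q x) = c * guesswork n q"
proof -
  obtain \<psi> where \<psi>: "is_sorting_rank n q \<psi>" and eq: "guesswork n q = (\<Sum>x=1..n. real (\<psi> x) * q x)"
    using guesswork_sorting_rank_exists by blast
  have "is_sorting_rank n (\<lambda>x. c * q x) \<psi>"
    using \<psi> \<open>0 \<le> c\<close> by (auto simp: is_sorting_rank_def intro: mult_left_mono)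
  then have "guesswork n (\<lambda>x. c * q x) = (\<Sum>x=1..n. real (\<psi> x) * (c * q x))"
    using nonneg \<open>0 \<le> c\<close> by (intro guesswork_eq_sum_sorting_rank) auto
  then show ?thesis using eq by (simp add: sum_distrib_left algebra_simps)
qed

lemma desc_entry_antimono:
  assumes "1 \<le> i" "i \<le> i'" "i' \<le> n"
  shows "desc_entry n q i' \<le> desc_entry n q i"
proof -
  define xs where "xs = rev (sort (map q [1..<Suc n]))"
  have "sorted (rev xs)" "length xs = n" by (simp_all add: xs_def)
  then show ?thesis using assms sorted_rev_nth_mono[of xs "i - 1" "i' - 1"]
    by (simp add: desc_entry_def xs_def)
qed

lemma desc_entry_in_image:
  assumes "i \<in> {1..n}"
  shows "desc_entry n q i \<in> q ` {1..n}"
proof -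
  have "i - 1 < length (rev (sort (map q [1..<Suc n])))" using assms by auto
  then have "desc_entry n q i \<in> set (rev (sort (map q [1..<Suc n])))"
    unfolding desc_entry_def by (rule nth_mem)
  then show ?thesis by auto
qed

lemma has_sum_finite_sum:
  fixes f :: "'i \<Rightarrow> 'a \<Rightarrow> 'b::topological_comm_monoid_add"
  assumes "finite I" and "\<And>i. i \<in> I \<Longrightarrow> (f i has_sum s i) A"
  shows "((\<lambda>y. \<Sum>i\<in>I. f i y) has_sum (\<Sum>i\<in>I. s i)) A"
  using assms by (induction I rule: finite_induct) (auto intro: has_sum_add)

lemma cond_guesswork_summand_eq:
  assumes W: "\<forall>x\<in>{1..n}. 0 \<le> W x y" and p: "\<forall>x\<in>{1..n}. 0 < p x"
  shows "(if 0 < out_prob n p W y then out_prob n p W y * guesswork n (posterior n p W y) else 0)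
       = guesswork n (\<lambda>x. p x * W x y)"
proof -
  have nonneg: "\<forall>x\<in>{1..n}. 0 \<le> p x * W x y" using W p by (simp add: less_imp_le)
  show ?thesis
  proof (cases "0 < out_prob n p W y")
    case True
    have "posterior n p W y = (\<lambda>x. (1 / out_prob n p W y) * (p x * W x y))"
      by (simp add: posterior_def fun_eq_iff)
    then show ?thesis using True guesswork_scale[OF nonneg, of "1 / out_prob n p W y"] by simp
  next
    case False
    then have "out_prob n p W y = 0"
      using sum_nonneg[of "{1..n}" "\<lambda>x. p x * W x y"] nonneg by (simp add: out_prob_def)
    then have "\<forall>x\<in>{1..n}. p x * W x y = 0"
      using sum_nonneg_eq_0_iff[of "{1..n}" "\<lambda>x. p x * W x y"] nonneg by (simp add: out_prob_def)
    then show ?thesis using False guesswork_eq_0 by simp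
  qed
qed

lemma cond_guesswork_eq_infsum:
  assumes "is_channel n W" and "\<forall>x\<in>{1..n}. 0 < p x"
  shows "cond_guesswork n p W = (\<Sum>\<^sub>\<infinity>y. guesswork n (\<lambda>x. p x * W x y))"
  unfolding cond_guesswork_def using assms
  by (intro infsum_cong cond_guesswork_summand_eq) (auto simp: is_channel_def)

section \<open>The upper bound\<close>

\<comment> \<open>(k + j)/2 is the mean of the guess positions j, ..., k.\<close>
definition bound_weight :: "nat \<Rightarrow> nat \<Rightarrow> nat \<Rightarrow> real" where
  "bound_weight k j i = (if i < j then real i else (real k + real j) / 2)"

lemma sum_bound_weight_eq_bound_term:
  assumes \<psi>: "bij_betw \<psi> {1..n} {1..n}" and desc: "\<forall>x\<in>{1..n}. desc_entry n p (\<psi> x) = p x"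
    and total: "(\<Sum>x=1..n. p x) = 1" and j: "1 \<le> j" "j \<le> n"
  shows "(\<Sum>x=1..n. bound_weight k j (\<psi> x) * p x) = bound_term n k p j"
proof -
  let ?d = "desc_entry n p"
  have split: "(\<Sum>i=1..n. g i) = (\<Sum>i=1..j-1. g i) + (\<Sum>i=j..n. g i)" for g :: "nat \<Rightarrow> real"
  proof -
    have "{1..n} = {1..j-1} \<union> {j..n}" using j by auto
    then show ?thesis by (simp add: sum.union_disjoint)
  qed
  have "(\<Sum>i=1..n. ?d i) = 1"
    using sum.reindex_bij_betw[OF \<psi>, of ?d] desc total by simp
  then have tail: "(\<Sum>i=j..n. ?d i) = 1 - (\<Sum>i=1..j-1. ?d i)"
    using split[of ?d] by simp
  have "(\<Sum>x=1..n. bound_weight k j (\<psi> x) * p x) = (\<Sum>x=1..n. bound_weight k j (\<psi> x) * ?d (\<psi> x))"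
    using desc by simp
  also have "\<dots> = (\<Sum>i=1..n. bound_weight k j i * ?d i)"
    by (rule sum.reindex_bij_betw[OF \<psi>])
  also have "\<dots> = (\<Sum>i=1..j-1. bound_weight k j i * ?d i) + (\<Sum>i=j..n. bound_weight k j i * ?d i)"
    by (rule split)
  also have "\<dots> = (\<Sum>i=1..j-1. real i * ?d i) + (\<Sum>i=j..n. (real k + real j) / 2 * ?d i)"
    by (intro arg_cong2[where f = "(+)"] sum.cong) (auto simp: bound_weight_def)
  also have "\<dots> = (\<Sum>i=1..j-1. real i * ?d i) + (real k + real j) / 2 * (\<Sum>i=j..n. ?d i)"
    by (simp add: sum_distrib_left)
  also have "\<dots> = bound_term n k p j"
    by (simp add: bound_term_def tail)
  finally show ?thesis .
qed

lemma inj_on_add_mod: "inj_on (\<lambda>u. (u + a) mod L) {..<L::nat}"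
proof (rule inj_onI)
  fix u v assume "u \<in> {..<L}" "v \<in> {..<L}" "(u + a) mod L = (v + a) mod L"
  then obtain q1 q2 where "u + a + L * q1 = v + a + L * q2"
    by (auto simp: nat_mod_eq_iff)
  then have "(u + L * q1) mod L = (v + L * q2) mod L" by simp
  then show "u = v" using \<open>u \<in> {..<L}\<close> \<open>v \<in> {..<L}\<close> by simp
qed

lemma bij_betw_add_mod:
  assumes "0 < (L::nat)"
  shows "bij_betw (\<lambda>u. (u + a) mod L) {..<L} {..<L}"
proof -
  have "(\<lambda>u. (u + a) mod L) ` {..<L} = {..<L}"
    using assms by (intro endo_inj_surj inj_on_add_mod) auto
  then show ?thesis using inj_on_add_mod by (simp add: bij_betw_def)
qed

lemma sum_atLeastAtMost_real:
  assumes "j \<le> k"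
  shows "(\<Sum>i=j..k. real i) = (real k + 1 - real j) * (real k + real j) / 2"
  using assms by (induction k rule: dec_induct) (simp_all add: atLeastAtMostSuc_conv field_simps)

lemma sum_positions_diff_le:
  assumes T: "T \<subseteq> {1..<j}" and j: "1 \<le> j" "j \<le> k"
  shows "(\<Sum>i\<in>{1..k} - T. real i) \<le> card ({1..k} - T) * ((real k + real j) / 2)"
proof -
  define U where "U = {1..<j} - T"
  define m where "m = (real k + real j) / 2"
  have split: "{1..k} - T = {j..k} \<union> U" and disjoint: "{j..k} \<inter> U = {}"
    using T j by (auto simp: U_def)
  have card: "card ({1..k} - T) = card {j..k} + card U"
    unfolding split by (rule card_Un_disjoint) (use disjoint in \<open>auto simp: U_def\<close>)
  have "(\<Sum>i\<in>{1..k} - T. real i) = (\<Sum>i=j..k. real i) + (\<Sum>i\<in>U. real i)"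
    unfolding split by (rule sum.union_disjoint) (use disjoint in \<open>auto simp: U_def\<close>)
  also have "\<dots> \<le> card {j..k} * m + card U * m"
  proof (rule add_mono)
    show "(\<Sum>i=j..k. real i) \<le> card {j..k} * m"
      using j by (simp add: sum_atLeastAtMost_real of_nat_diff m_def)
    show "(\<Sum>i\<in>U. real i) \<le> card U * m"
      by (rule sum_bounded_above) (use j in \<open>auto simp: U_def m_def\<close>)
  qed
  also have "\<dots> = card ({1..k} - T) * m"
    unfolding card by (simp add: algebra_simps)
  finally show ?thesis unfolding m_def .
qed

lemma cyclic_assignment:
  fixes e :: "'a \<Rightarrow> nat" and f :: "nat \<Rightarrow> nat"
  assumes e: "inj_on e A" "e ` A \<subseteq> {..<L}" and f: "bij_betw f {..<L} P" and L: "0 < L"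
  shows "inj_on (\<lambda>x. f ((e x + u) mod L)) A" and "(\<lambda>x. f ((e x + u) mod L)) ` A \<subseteq> P"
    and "x \<in> A \<Longrightarrow> (\<Sum>u<L. real (f ((e x + u) mod L))) = (\<Sum>i\<in>P. real i)"
proof -
  have "inj_on (f \<circ> (\<lambda>v. (v + u) mod L) \<circ> e) A"
  proof (intro comp_inj_on e(1))
    show "inj_on (\<lambda>v. (v + u) mod L) (e ` A)"
      using inj_on_add_mod[of u L] e(2) by (rule inj_on_subset)
    show "inj_on f ((\<lambda>v. (v + u) mod L) ` e ` A)"
      using bij_betw_imp_inj_on[OF f] by (rule inj_on_subset) (use L in auto)
  qed
  then show "inj_on (\<lambda>x. f ((e x + u) mod L)) A" by (simp add: comp_def)
  show "(\<lambda>x. f ((e x + u) mod L)) ` A \<subseteq> P" using bij_betwE[OF f] L by auto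
  show "(\<Sum>u<L. real (f ((e x + u) mod L))) = (\<Sum>i\<in>P. real i)" if "x \<in> A"
  proof -
    have "(\<Sum>u<L. real (f ((e x + u) mod L))) = (\<Sum>u<L. real (f ((u + e x) mod L)))"
      by (simp add: add.commute)
    also have "\<dots> = (\<Sum>v<L. real (f v))"
      by (rule sum.reindex_bij_betw[OF bij_betw_add_mod[OF L]])
    also have "\<dots> = (\<Sum>i\<in>P. real i)"
      by (rule sum.reindex_bij_betw[OF f])
    finally show ?thesis .
  qed
qed

lemma free_positions:
  assumes \<psi>: "bij_betw \<psi> {1..n} {1..n}" and j: "1 \<le> j" "j \<le> k"
    and S: "S \<subseteq> {1..n}" "card S \<le> k"
  shows "\<psi> ` {x\<in>S. \<psi> x < j} \<subseteq> {1..<j}" and "0 < card ({1..k} - \<psi> ` {x\<in>S. \<psi> x < j})"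
    and "card {x\<in>S. j \<le> \<psi> x} \<le> card ({1..k} - \<psi> ` {x\<in>S. \<psi> x < j})"
proof -
  define top where "top = {x\<in>S. \<psi> x < j}"
  define rest where "rest = {x\<in>S. j \<le> \<psi> x}"
  have \<psi>_inj: "inj_on \<psi> top"
    using bij_betw_imp_inj_on[OF \<psi>] by (rule inj_on_subset) (use S in \<open>auto simp: top_def\<close>)
  show \<psi>_top: "\<psi> ` {x\<in>S. \<psi> x < j} \<subseteq> {1..<j}"
    using bij_betw_apply[OF \<psi>] S by fastforce
  then have card_top: "card top \<le> j - 1"
    using card_mono[OF _ \<psi>_top] card_image[OF \<psi>_inj] by (simp add: top_def)
  have top_le_k: "\<psi> ` top \<subseteq> {1..k}" using \<psi>_top j by (auto simp: top_def)
  have free: "card ({1..k} - \<psi> ` top) = k - card top"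
    unfolding card_Diff_subset[OF finite_subset[OF top_le_k finite_atLeastAtMost] top_le_k]
    using card_image[OF \<psi>_inj] by simp
  then show "0 < card ({1..k} - \<psi> ` {x\<in>S. \<psi> x < j})" using card_top j by (simp add: top_def)
  have S_split: "S = top \<union> rest" "top \<inter> rest = {}" by (auto simp: top_def rest_def)
  have "card S = card top + card rest"
    unfolding S_split(1) by (rule card_Un_disjoint) (use S S_split in \<open>auto intro: finite_subset\<close>)
  then show "card {x\<in>S. j \<le> \<psi> x} \<le> card ({1..k} - \<psi> ` {x\<in>S. \<psi> x < j})"
    using S free by (simp add: top_def rest_def)
qed

lemma rotating_guess_positions:
  assumes \<psi>: "bij_betw \<psi> {1..n} {1..n}" and j: "1 \<le> j" "j \<le> k"
    and S: "S \<subseteq> {1..n}" "card S \<le> k"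
  obtains L :: nat and pos :: "nat \<Rightarrow> nat \<Rightarrow> nat"
  where "0 < L" and "\<And>u. \<forall>x\<in>{1..n}. 1 \<le> pos u x" and "\<And>u. inj_on (pos u) S"
    and "\<And>x. x \<in> {1..n} \<Longrightarrow> (\<Sum>u<L. real (pos u x)) \<le> L * bound_weight k j (\<psi> x)"
proof -
  define top where "top = {x\<in>S. \<psi> x < j}"
  define rest where "rest = {x\<in>S. j \<le> \<psi> x}"
  define P where "P = {1..k} - \<psi> ` top"
  define L where "L = card P"
  have \<psi>_inj: "inj_on \<psi> top"
    using bij_betw_imp_inj_on[OF \<psi>] by (rule inj_on_subset) (use S in \<open>auto simp: top_def\<close>)
  note free = free_positions[OF \<psi> j S, folded top_def rest_def, folded P_def, folded L_def]
  have S_split: "S = top \<union> rest" "top \<inter> rest = {}" by (auto simp: top_def rest_def)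
  obtain e where e: "inj_on e rest" "e ` rest \<subseteq> {..<L}"
    using card_le_inj[of rest "{..<L}"] free(3) S by (auto simp: rest_def intro: finite_subset)
  obtain f where f: "bij_betw f {..<L} P"
    using ex_bij_betw_nat_finite[of P] by (auto simp: L_def P_def atLeast0LessThan)
  define pos where
    "pos u x = (if \<psi> x < j then \<psi> x else if x \<in> rest then f ((e x + u) mod L) else 1)" for u x
  have pos_rest: "pos u x = f ((e x + u) mod L)" if "x \<in> rest" for u x
    using that by (simp add: pos_def rest_def)
  note cyclic = cyclic_assignment[OF e f free(2)]
  have pos_ge_1: "\<forall>x\<in>{1..n}. 1 \<le> pos u x" for u
    using bij_betw_apply[OF \<psi>] cyclic(2)[of u] by (fastforce simp: pos_def P_def)
  have pos_inj: "inj_on (pos u) S" for u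
  proof -
    have "inj_on (pos u) top"
      using \<psi>_inj by (rule inj_on_cong[THEN iffD1, rotated]) (simp add: pos_def top_def)
    moreover have "inj_on (pos u) rest"
      using cyclic(1) by (rule inj_on_cong[THEN iffD1, rotated]) (simp add: pos_rest)
    moreover have "pos u ` top = \<psi> ` top" by (rule image_cong) (auto simp: pos_def top_def)
    moreover have "pos u ` rest \<subseteq> P" using cyclic(2)[of u] pos_rest by auto
    ultimately have "inj_on (pos u) (top \<union> rest)"
      using S_split(2) unfolding P_def inj_on_Un by (auto simp: Diff_triv Int_commute)
    then show ?thesis by (simp add: S_split(1))
  qed
  have average: "(\<Sum>u<L. real (pos u x)) \<le> L * bound_weight k j (\<psi> x)" if "x \<in> {1..n}" for x
  proof (cases "\<psi> x < j")
    case False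
    show ?thesis
    proof (cases "x \<in> rest")
      case True
      then have "(\<Sum>u<L. real (pos u x)) = (\<Sum>i\<in>P. real i)" by (simp add: pos_rest cyclic(3))
      also have "\<dots> \<le> L * bound_weight k j (\<psi> x)"
        using sum_positions_diff_le[OF free(1) j] False by (simp add: L_def P_def bound_weight_def)
      finally show ?thesis .
    next
      case not_rest: False
      have "(\<Sum>u<L. real (pos u x)) = real L * 1" using False not_rest by (simp add: pos_def)
      also have "\<dots> \<le> L * bound_weight k j (\<psi> x)"
        using False j by (intro mult_left_mono) (auto simp: bound_weight_def)
      finally show ?thesis .
    qed
  qed (simp add: pos_def bound_weight_def)
  show thesis by (rule that[OF free(2) pos_ge_1 pos_inj average])
qed

lemma guesswork_le_bound_weight_sum:
  assumes \<psi>: "bij_betw \<psi> {1..n} {1..n}" and j: "1 \<le> j" "j \<le> k"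
    and nonneg: "\<forall>x\<in>{1..n}. 0 \<le> c x" and support: "card {x\<in>{1..n}. c x \<noteq> 0} \<le> k"
  shows "guesswork n c \<le> (\<Sum>x=1..n. bound_weight k j (\<psi> x) * c x)"
proof -
  obtain L :: nat and pos where L: "0 < L" and pos: "\<And>u. \<forall>x\<in>{1..n}. 1 \<le> pos u x"
      "\<And>u. inj_on (pos u) {x\<in>{1..n}. c x \<noteq> 0}"
    and average: "\<And>x. x \<in> {1..n} \<Longrightarrow> (\<Sum>u<L. real (pos u x)) \<le> L * bound_weight k j (\<psi> x)"
    by (rule rotating_guess_positions[OF \<psi> j _ support]) auto
  have "L * guesswork n c \<le> (\<Sum>u<L. \<Sum>x=1..n. real (pos u x) * c x)"
    using sum_mono[of "{..<L}" "\<lambda>_. guesswork n c"] guesswork_le_sum_positions[OF nonneg pos]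
    by simp
  also have "\<dots> = (\<Sum>x=1..n. (\<Sum>u<L. real (pos u x)) * c x)"
    by (subst sum.swap) (simp add: sum_distrib_right)
  also have "\<dots> \<le> (\<Sum>x=1..n. L * bound_weight k j (\<psi> x) * c x)"
    using average nonneg by (intro sum_mono mult_right_mono) auto
  also have "\<dots> = L * (\<Sum>x=1..n. bound_weight k j (\<psi> x) * c x)"
    by (simp add: sum_distrib_left mult.assoc)
  finally show ?thesis using L by simp
qed

lemma cond_guesswork_le_bound_term:
  assumes \<psi>: "bij_betw \<psi> {1..n} {1..n}" and desc: "\<forall>x\<in>{1..n}. desc_entry n p (\<psi> x) = p x"
    and total: "(\<Sum>x=1..n. p x) = 1" and j: "1 \<le> j" "j \<le> k" "k \<le> n"
    and p: "\<forall>x\<in>{1..n}. 0 < p x" and W: "feasible n k W"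
  shows "cond_guesswork n p W \<le> bound_term n k p j"
proof -
  define col where "col y x = p x * W x y" for y x
  define g where "g y = (\<Sum>x=1..n. bound_weight k j (\<psi> x) * col y x)" for y
  have W_nonneg: "\<forall>x\<in>{1..n}. \<forall>y. 0 \<le> W x y"
    and W_sum: "\<forall>x\<in>{1..n}. ((\<lambda>y. W x y) has_sum 1) UNIV"
    using W by (auto simp: feasible_def is_channel_def)
  have col_nonneg: "\<forall>x\<in>{1..n}. 0 \<le> col y x" for y
    using W_nonneg p by (simp add: col_def less_imp_le)
  have col_le: "guesswork n (col y) \<le> g y" for y
  proof -
    have "{x\<in>{1..n}. col y x \<noteq> 0} \<subseteq> preimage n W y"
      using W_nonneg by (auto simp: preimage_def col_def less_le)
    then have "card {x\<in>{1..n}. col y x \<noteq> 0} \<le> card (preimage n W y)"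
      by (rule card_mono[rotated]) (simp add: preimage_def)
    also have "\<dots> \<le> k" using W by (simp add: feasible_def)
    finally show ?thesis
      unfolding g_def by (rule guesswork_le_bound_weight_sum[OF \<psi> j(1,2) col_nonneg])
  qed
  have "(g has_sum (\<Sum>x=1..n. bound_weight k j (\<psi> x) * p x * 1)) UNIV"
    unfolding g_def col_def mult.assoc[symmetric]
    using W_sum by (intro has_sum_finite_sum has_sum_cmult_right) auto
  moreover have "(\<Sum>x=1..n. bound_weight k j (\<psi> x) * p x) = bound_term n k p j"
    using j by (intro sum_bound_weight_eq_bound_term[OF \<psi> desc total]) auto
  ultimately have g_sum: "(g has_sum bound_term n k p j) UNIV"
    by (simp only: mult_1_right)
  then have g_summable: "g summable_on UNIV" by (rule has_sum_imp_summable)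
  have summable: "(\<lambda>y. guesswork n (col y)) summable_on UNIV"
    using g_summable col_le guesswork_nonneg[OF col_nonneg] by (rule summable_on_comparison_test)
  have "cond_guesswork n p W = (\<Sum>\<^sub>\<infinity>y. guesswork n (col y))"
    unfolding col_def using W p by (intro cond_guesswork_eq_infsum) (simp add: feasible_def)
  also have "\<dots> \<le> (\<Sum>\<^sub>\<infinity>y. g y)"
    using summable g_summable col_le by (rule infsum_mono)
  also have "\<dots> = bound_term n k p j"
    using g_sum by (rule infsumI)
  finally show ?thesis .
qed

section \<open>Attaining the bound\<close>

lemma block_rank_exists:
  assumes \<psi>: "bij_betw \<psi> {1..n} {1..n}" and j: "1 \<le> j" "j \<le> k" "k \<le> n"
    and S: "S \<subseteq> {x\<in>{1..n}. j \<le> \<psi> x}" "card S = k + 1 - j"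
  obtains \<rho> where "bij_betw \<rho> {1..n} {1..n}" and "\<And>x. x \<in> {1..n} \<Longrightarrow> \<psi> x < j \<Longrightarrow> \<rho> x = \<psi> x"
    and "bij_betw \<rho> S {j..k}" and "\<And>x. x \<in> {1..n} \<Longrightarrow> j \<le> \<psi> x \<Longrightarrow> x \<notin> S \<Longrightarrow> k < \<rho> x"
proof -
  define top where "top = {x\<in>{1..n}. \<psi> x < j}"
  define others where "others = {x\<in>{1..n}. j \<le> \<psi> x} - S"
  have "card {x\<in>{1..n}. j \<le> \<psi> x} = card {i\<in>{1..n}. j \<le> i}"
    using \<psi> by (rule bij_betw_same_card[OF bij_betw_filter])
  also have "{i\<in>{1..n}. j \<le> i} = {j..n}" using j by auto
  finally have "card others = card {k+1..n}"
    using S j by (simp add: others_def card_Diff_subset finite_subset)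
  then obtain h where h: "bij_betw h others {k+1..n}"
    using finite_same_card_bij[of others "{k+1..n}"] by (auto simp: others_def)
  have "finite S" using S(1) by (rule finite_subset) simp
  then obtain g where g: "bij_betw g S {j..k}"
    using finite_same_card_bij[of S "{j..k}"] S(2) by auto
  define \<rho> where "\<rho> x = (if \<psi> x < j then \<psi> x else if x \<in> S then g x else h x)" for x
  have "{i\<in>{1..n}. i < j} = {1..<j}" using j by auto
  then have "bij_betw \<psi> top {1..<j}"
    using bij_betw_filter[OF \<psi>, of "\<lambda>i. i < j"] by (simp add: top_def)
  then have "bij_betw \<rho> top {1..<j}" by (rule bij_betw_cong[THEN iffD1, rotated]) (simp add: \<rho>_def top_def)
  moreover have \<rho>_S: "bij_betw \<rho> S {j..k}"
    using g by (rule bij_betw_cong[THEN iffD1, rotated]) (use S in \<open>auto simp: \<rho>_def\<close>)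
  moreover have \<rho>_others: "bij_betw \<rho> others {k+1..n}"
    using h by (rule bij_betw_cong[THEN iffD1, rotated]) (simp add: \<rho>_def others_def)
  ultimately have "bij_betw \<rho> (top \<union> S \<union> others) ({1..<j} \<union> {j..k} \<union> {k+1..n})"
    by (intro bij_betw_combine) (use j in auto)
  moreover have "top \<union> S \<union> others = {1..n}" using S by (auto simp: top_def others_def)
  moreover have "{1..<j} \<union> {j..k} \<union> {k+1..n} = {1..n}" using j by auto
  ultimately have "bij_betw \<rho> {1..n} {1..n}" by simp
  moreover have "k < \<rho> x" if "x \<in> {1..n}" "j \<le> \<psi> x" "x \<notin> S" for x
    using bij_betw_apply[OF \<rho>_others, of x] that by (auto simp: others_def)
  ultimately show thesis using that \<rho>_S by (simp add: \<rho>_def)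
qed

lemma guesswork_eq_bound_weight_sum:
  assumes \<psi>: "bij_betw \<psi> {1..n} {1..n}" and j: "1 \<le> j" "j \<le> k" "k \<le> n"
    and S: "S \<subseteq> {x\<in>{1..n}. j \<le> \<psi> x}" "card S = k + 1 - j"
    and top_antitone: "\<forall>x\<in>{1..n}. \<forall>y\<in>{1..n}. \<psi> x < \<psi> y \<longrightarrow> \<psi> y < j \<longrightarrow> c y \<le> c x"
    and top_ge: "\<forall>x\<in>{1..n}. \<psi> x < j \<longrightarrow> \<mu> \<le> c x"
    and on_S: "\<forall>x\<in>S. c x = \<mu>" and off_S: "\<forall>x\<in>{1..n}. j \<le> \<psi> x \<longrightarrow> x \<notin> S \<longrightarrow> c x = 0"
    and "0 \<le> \<mu>"
  shows "guesswork n c = (\<Sum>x=1..n. bound_weight k j (\<psi> x) * c x)"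
proof -
  obtain \<rho> where \<rho>: "bij_betw \<rho> {1..n} {1..n}" and \<rho>_top: "\<And>x. x \<in> {1..n} \<Longrightarrow> \<psi> x < j \<Longrightarrow> \<rho> x = \<psi> x"
    and \<rho>_S: "bij_betw \<rho> S {j..k}" and \<rho>_others: "\<And>x. x \<in> {1..n} \<Longrightarrow> j \<le> \<psi> x \<Longrightarrow> x \<notin> S \<Longrightarrow> k < \<rho> x"
    using block_rank_exists[OF \<psi> j S] by blast
  have nonneg: "\<forall>x\<in>{1..n}. 0 \<le> c x"
    using top_ge on_S off_S \<open>0 \<le> \<mu>\<close> by (metis order_trans not_le order_refl)
  have "is_sorting_rank n c \<rho>"
    unfolding is_sorting_rank_def
  proof (intro conjI \<rho> ballI impI)
    fix x y assume x: "x \<in> {1..n}" and y: "y \<in> {1..n}" and less: "\<rho> x < \<rho> y"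
    have \<rho>_S_le: "j \<le> \<rho> z \<and> \<rho> z \<le> k" if "z \<in> S" for z using bij_betw_apply[OF \<rho>_S that] by simp
    show "c y \<le> c x"
    proof (cases "\<psi> y < j")
      case True
      then have "\<psi> x < j"
        using less \<rho>_top[OF y] \<rho>_S_le \<rho>_others[OF x] j by (metis not_le order.strict_trans)
      then show ?thesis using top_antitone x y less True \<rho>_top by simp
    next
      case False
      show ?thesis
      proof (cases "y \<in> S")
        case True
        have "x \<in> S \<or> \<psi> x < j" using less \<rho>_others[OF x] \<rho>_S_le[OF True] by fastforce
        then show ?thesis using True on_S top_ge x by auto
      qed (use False off_S nonneg x y in auto)
    qed
  qed
  then have "guesswork n c = (\<Sum>x=1..n. real (\<rho> x) * c x)"
    using nonneg by (rule guesswork_eq_sum_sorting_rank)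
  also have "\<dots> = (\<Sum>x=1..n. bound_weight k j (\<psi> x) * c x)"
  proof -
    have sum_S: "(\<Sum>x\<in>S. real (\<rho> x)) = card S * ((real k + real j) / 2)"
      using sum.reindex_bij_betw[OF \<rho>_S, of real] sum_atLeastAtMost_real[OF j(2)] S(2) j
      by (simp add: of_nat_diff)
    have "(\<Sum>x=1..n. (real (\<rho> x) - bound_weight k j (\<psi> x)) * c x)
        = (\<Sum>x\<in>S. (real (\<rho> x) - bound_weight k j (\<psi> x)) * c x)"
      using S \<rho>_top off_S by (intro sum.mono_neutral_right) (auto simp: bound_weight_def)
    also have "\<dots> = (\<Sum>x\<in>S. (real (\<rho> x) - (real k + real j) / 2) * \<mu>)"
      by (rule sum.cong) (use S on_S in \<open>auto simp: bound_weight_def\<close>)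
    also have "\<dots> = \<mu> * ((\<Sum>x\<in>S. real (\<rho> x)) - card S * ((real k + real j) / 2))"
      by (simp add: sum_subtractf sum_distrib_left algebra_simps)
    finally show ?thesis using sum_S by (simp add: sum_subtractf left_diff_distrib)
  qed
  finally show ?thesis .
qed

definition coverage :: "('a set \<times> real) list \<Rightarrow> 'a \<Rightarrow> real" where
  "coverage Fs x = sum_list (map (\<lambda>F. if x \<in> fst F then snd F else 0) Fs)"

definition total_weight :: "('a set \<times> real) list \<Rightarrow> real" where
  "total_weight Fs = sum_list (map snd Fs)"

lemma coverage_append: "coverage (Fs @ Gs) x = coverage Fs x + coverage Gs x"
  by (simp add: coverage_def)

lemma total_weight_append: "total_weight (Fs @ Gs) = total_weight Fs + total_weight Gs"
  by (simp add: total_weight_def)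

lemma coverage_map_insert:
  "coverage (map (\<lambda>F. (insert a (fst F), snd F)) Fs) x = (if x = a then total_weight Fs else coverage Fs x)"
  by (induction Fs) (auto simp: coverage_def total_weight_def)

lemma blocks_insert:
  assumes "\<forall>F\<in>set Fs. fst F \<subseteq> R \<and> card (fst F) = s \<and> 0 \<le> snd F" and "finite R" and "a \<notin> R"
  shows "\<forall>F\<in>set (map (\<lambda>F. (insert a (fst F), snd F)) Fs).
           fst F \<subseteq> insert a R \<and> card (fst F) = Suc s \<and> 0 \<le> snd F"
proof
  fix F assume "F \<in> set (map (\<lambda>F. (insert a (fst F), snd F)) Fs)"
  then obtain G where G: "G \<in> set Fs" "F = (insert a (fst G), snd G)" by auto
  then have "finite (fst G)" "a \<notin> fst G" using assms by (auto intro: finite_subset)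
  then show "fst F \<subseteq> insert a R \<and> card (fst F) = Suc s \<and> 0 \<le> snd F" using assms(1) G by auto
qed

lemma coverage_eq_0: "\<forall>F\<in>set Fs. x \<notin> fst F \<Longrightarrow> coverage Fs x = 0"
  by (induction Fs) (auto simp: coverage_def)

lemma sum_min_ge:
  fixes v :: "'a \<Rightarrow> real"
  assumes fin: "finite R" and v: "\<forall>x\<in>R. 0 \<le> v x \<and> v x \<le> m" and s: "1 \<le> s"
    and sum: "sum v R = real s * M - m" and "m \<le> M" "0 \<le> m"
  shows "real s * (M - m) \<le> (\<Sum>x\<in>R. min (v x) (M - m))"
proof -
  define B where "B = {x\<in>R. M - m \<le> v x}"
  have B: "finite B" "B \<subseteq> R" using fin by (auto simp: B_def)
  have sum_B: "(\<Sum>x\<in>B. min (v x) (M - m)) = card B * (M - m)" by (simp add: B_def)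
  show ?thesis
  proof (cases "s \<le> card B")
    case True
    then have "real s * (M - m) \<le> card B * (M - m)"
      using \<open>m \<le> M\<close> by (intro mult_right_mono) auto
    also have "\<dots> \<le> (\<Sum>x\<in>R. min (v x) (M - m))"
      unfolding sum_B[symmetric] using B v \<open>m \<le> M\<close> by (intro sum_mono2[OF fin]) auto
    finally show ?thesis .
  next
    case False
    have "sum v B \<le> card B * m" using sum_bounded_above[of B v m] v B by auto
    moreover have "(\<Sum>x\<in>R - B. min (v x) (M - m)) = sum v (R - B)"
      by (rule sum.cong) (auto simp: B_def)
    moreover have "sum v (R - B) = sum v R - sum v B"
      using fin B(2) by (rule sum_diff)
    moreover have "(\<Sum>x\<in>R. min (v x) (M - m)) = card B * (M - m) + (\<Sum>x\<in>R - B. min (v x) (M - m))"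
      using B fin by (simp add: sum.subset_diff[of B R] sum_B)
    moreover have "0 \<le> card B * (M - m) + (real s - 1 - card B) * m"
      using False \<open>m \<le> M\<close> \<open>0 \<le> m\<close> by (intro add_nonneg_nonneg mult_nonneg_nonneg) auto
    ultimately show ?thesis using sum by (simp add: algebra_simps)
  qed
qed

lemma capped_part_exists:
  fixes v :: "'a \<Rightarrow> real"
  assumes fin: "finite R" and v: "\<forall>x\<in>R. 0 \<le> v x \<and> v x \<le> m" and s: "1 \<le> s"
    and sum: "sum v R = real s * M - m" and "m \<le> M" "0 \<le> m"
  obtains u where "\<forall>x\<in>R. 0 \<le> u x \<and> u x \<le> v x \<and> u x \<le> M - m" and "sum u R = real s * (M - m)"
proof -
  define w where "w x = min (v x) (M - m)" for x
  define \<theta> where "\<theta> = real s * (M - m) / sum w R"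
  have ge: "real s * (M - m) \<le> sum w R"
    unfolding w_def by (rule sum_min_ge[OF assms])
  have "0 \<le> real s * (M - m)" using \<open>m \<le> M\<close> by simp
  then have \<theta>: "0 \<le> \<theta>" "\<theta> \<le> 1" using ge by (auto simp: \<theta>_def divide_simps)
  show thesis
  proof (rule that[of "\<lambda>x. \<theta> * w x"])
    show "\<forall>x\<in>R. 0 \<le> \<theta> * w x \<and> \<theta> * w x \<le> v x \<and> \<theta> * w x \<le> M - m"
      using v \<theta> \<open>m \<le> M\<close> by (auto simp: w_def intro: mult_le_one order_trans[OF mult_left_le_one_le])
    have "(\<Sum>x\<in>R. \<theta> * w x) = \<theta> * sum w R" by (simp add: sum_distrib_left)
    then show "(\<Sum>x\<in>R. \<theta> * w x) = real s * (M - m)"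
      using ge \<open>0 \<le> real s * (M - m)\<close> by (cases "sum w R = 0") (auto simp: \<theta>_def)
  qed
qed

\<comment> \<open>With m = v x0 the largest coordinate, split v on R - {x0} as u + (v - u)
  with u capped at M - m and of sum s (M - m); decompose u into s-blocks of total weight M - m and
  v - u into (s - 1)-blocks of total weight m, and add x0 to the latter.\<close>
lemma hypersimplex_decomposition:
  fixes v :: "'a \<Rightarrow> real"
  assumes "finite R" and "\<forall>x\<in>R. 0 \<le> v x \<and> v x \<le> M" and "sum v R = real s * M" and "0 \<le> M"
  shows "\<exists>Fs. (\<forall>F\<in>set Fs. fst F \<subseteq> R \<and> card (fst F) = s \<and> 0 \<le> snd F)
             \<and> (\<forall>x\<in>R. coverage Fs x = v x) \<and> total_weight Fs = M"
  using assms
proof (induction "card R" arbitrary: R s v M rule: less_induct)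
  case less
  note fin = less.prems(1) and v = less.prems(2) and sum = less.prems(3) and M = less.prems(4)
  show ?case
  proof (cases "R = {} \<or> s = 0")
    case True
    then have v0: "\<forall>x\<in>R. v x = 0"
      using sum_nonneg_eq_0_iff[OF fin, of v] v sum by auto
    show ?thesis
    proof (cases "s = 0")
      case True
      then show ?thesis using v0 M by (intro exI[of _ "[({}, M)]"]) (simp add: coverage_def total_weight_def)
    next
      case False
      then have "M = 0" using \<open>R = {} \<or> s = 0\<close> sum by simp
      then show ?thesis using v0 by (intro exI[of _ "[]"]) (simp add: coverage_def total_weight_def)
    qed
  next
    case False
    then have "R \<noteq> {}" and s: "1 \<le> s" by auto
    have "Max (v ` R) \<in> v ` R" using fin \<open>R \<noteq> {}\<close> by simp
    then obtain x0 where x0: "x0 \<in> R" "v x0 = Max (v ` R)" by (metis imageE)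
    define m where "m = v x0"
    define R' where "R' = R - {x0}"
    have R': "finite R'" "card R' < card R" "x0 \<notin> R'"
      using fin card_Diff1_less[OF fin x0(1)] by (auto simp: R'_def)
    have v': "\<forall>x\<in>R'. 0 \<le> v x \<and> v x \<le> m"
      using v fin x0 by (auto simp: R'_def m_def)
    have "m \<le> M" "0 \<le> m" using v x0(1) by (auto simp: m_def)
    have sum': "sum v R' = real s * M - m"
      using sum fin x0(1) by (simp add: R'_def m_def sum_diff1)
    obtain u where u: "\<forall>x\<in>R'. 0 \<le> u x \<and> u x \<le> v x \<and> u x \<le> M - m"
      and sum_u: "sum u R' = real s * (M - m)"
      using capped_part_exists[OF R'(1) v' s sum' \<open>m \<le> M\<close> \<open>0 \<le> m\<close>] by blast
    obtain Fu where Fu: "\<forall>F\<in>set Fu. fst F \<subseteq> R' \<and> card (fst F) = s \<and> 0 \<le> snd F"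
      "\<forall>x\<in>R'. coverage Fu x = u x" "total_weight Fu = M - m"
      using less.hyps[OF R'(2) R'(1), of u "M - m" s] u sum_u \<open>m \<le> M\<close> by auto
    have "sum (\<lambda>x. v x - u x) R' = real (s - 1) * m"
      using sum' sum_u s by (simp add: sum_subtractf of_nat_diff algebra_simps)
    then obtain Fw where Fw: "\<forall>F\<in>set Fw. fst F \<subseteq> R' \<and> card (fst F) = s - 1 \<and> 0 \<le> snd F"
      "\<forall>x\<in>R'. coverage Fw x = v x - u x" "total_weight Fw = m"
      using less.hyps[OF R'(2) R'(1), of "\<lambda>x. v x - u x" m "s - 1"] u v' \<open>0 \<le> m\<close> by force
    define Fs where "Fs = Fu @ map (\<lambda>F. (insert x0 (fst F), snd F)) Fw"
    have "\<forall>F\<in>set Fs. fst F \<subseteq> R \<and> card (fst F) = s \<and> 0 \<le> snd F"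
    proof -
      have "insert x0 R' = R" "Suc (s - 1) = s" using x0(1) s by (auto simp: R'_def)
      then have "\<forall>F\<in>set (map (\<lambda>F. (insert x0 (fst F), snd F)) Fw).
          fst F \<subseteq> R \<and> card (fst F) = s \<and> 0 \<le> snd F"
        using blocks_insert[OF Fw(1) R'(1) R'(3)] by simp
      moreover have "\<forall>F\<in>set Fu. fst F \<subseteq> R \<and> card (fst F) = s \<and> 0 \<le> snd F"
        using Fu(1) by (auto simp: R'_def)
      ultimately show ?thesis unfolding Fs_def set_append ball_Un by blast
    qed
    moreover have "coverage Fs x = v x" if "x \<in> R" for x
    proof (cases "x = x0")
      case True
      have "coverage Fu x0 = 0" using Fu(1) R'(3) by (intro coverage_eq_0) auto
      then show ?thesis using True Fw(3) by (simp add: Fs_def coverage_append coverage_map_insert m_def)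
    next
      case False
      then have "x \<in> R'" using that by (simp add: R'_def)
      then show ?thesis using False Fu(2) Fw(2) by (simp add: Fs_def coverage_append coverage_map_insert)
    qed
    moreover have "total_weight Fs = M"
      using Fu(3) Fw(3) by (simp add: Fs_def total_weight_append total_weight_def comp_def)
    ultimately show ?thesis by blast
  qed
qed

definition balanced_index :: "nat \<Rightarrow> nat \<Rightarrow> (nat \<Rightarrow> real) \<Rightarrow> nat \<Rightarrow> bool" where
  "balanced_index n k d j \<longleftrightarrow> 1 \<le> j \<and> j \<le> k \<and>
     (\<forall>i\<in>{j..n}. real (k + 1 - j) * d i \<le> (\<Sum>i'=j..n. d i')) \<and>
     (\<forall>i\<in>{1..<j}. (\<Sum>i'=j..n. d i') \<le> real (k + 1 - j) * d i)"

lemma balanced_index_exists: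
  fixes d :: "nat \<Rightarrow> real"
  assumes k: "0 < k" "k \<le> n" and pos: "\<forall>i\<in>{1..n}. 0 < d i"
    and antimono: "\<forall>i\<in>{1..n}. \<forall>i'\<in>{1..n}. i \<le> i' \<longrightarrow> d i' \<le> d i"
  obtains j where "balanced_index n k d j"
proof -
  define tail where "tail j = (\<Sum>i=j..n. d i)" for j
  define fits where "fits j \<longleftrightarrow> 1 \<le> j \<and> real (k + 1 - j) * d j \<le> tail j" for j
  have "fits k"
    using member_le_sum[of k "{k..n}" d] pos k by (simp add: fits_def tail_def less_imp_le)
  then obtain j where j: "fits j" and least: "\<And>i. i < j \<Longrightarrow> \<not> fits i"
    using exists_least_iff[of fits] by blast
  have "j \<le> k" using least \<open>fits k\<close> by (meson not_le)
  have "1 \<le> j" using j by (simp add: fits_def)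
  have tail_ge: "real (k + 1 - j) * d i \<le> tail j" if "i \<in> {j..n}" for i
  proof -
    have "d i \<le> d j" using antimono that \<open>1 \<le> j\<close> by auto
    then have "real (k + 1 - j) * d i \<le> real (k + 1 - j) * d j" by (rule mult_left_mono) simp
    also have "\<dots> \<le> tail j" using j by (simp add: fits_def)
    finally show ?thesis .
  qed
  have tail_le: "tail j \<le> real (k + 1 - j) * d i" if i: "i \<in> {1..<j}" for i
  proof -
    have "\<not> fits (j - 1)" "1 \<le> j - 1" using least i by auto
    moreover have "tail (j - 1) = d (j - 1) + tail j"
      using sum.atLeast_Suc_atMost[of "j - 1" n d] i \<open>j \<le> k\<close> k
      by (simp add: tail_def Suc_diff_1[of j])
    moreover have "real (k + 1 - (j - 1)) = real (k + 1 - j) + 1" using i \<open>j \<le> k\<close> by simp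
    ultimately have "tail j < real (k + 1 - j) * d (j - 1)"
      using i by (simp add: fits_def algebra_simps)
    also have "\<dots> \<le> real (k + 1 - j) * d i"
    proof (rule mult_left_mono)
      have "i \<le> j - 1" "j - 1 \<le> n" using i \<open>j \<le> k\<close> k by auto
      then show "d (j - 1) \<le> d i" using antimono[rule_format, of i "j - 1"] i by simp
    qed simp
    finally show ?thesis by simp
  qed
  have "balanced_index n k d j"
    unfolding balanced_index_def tail_def[symmetric]
    using \<open>1 \<le> j\<close> \<open>j \<le> k\<close> tail_ge tail_le by blast
  then show thesis by (rule that)
qed

lemma balanced_index_of_prior_exists:
  assumes "0 < k" "k \<le> n" and p: "\<forall>x\<in>{1..n}. 0 < p x"
  obtains j where "balanced_index n k (desc_entry n p) j"
proof (rule balanced_index_exists[OF assms(1,2)])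
  show "\<forall>i\<in>{1..n}. 0 < desc_entry n p i"
  proof
    fix i assume "i \<in> {1..n}"
    then obtain x where "x \<in> {1..n}" "desc_entry n p i = p x"
      using desc_entry_in_image[of i n p] by blast
    then show "0 < desc_entry n p i" using p by simp
  qed
  show "\<forall>i\<in>{1..n}. \<forall>i'\<in>{1..n}. i \<le> i' \<longrightarrow> desc_entry n p i' \<le> desc_entry n p i"
    by (simp add: desc_entry_antimono)
qed (rule that)

lemma balanced_index_share:
  assumes \<psi>: "bij_betw \<psi> {1..n} {1..n}" and desc: "\<forall>x\<in>{1..n}. desc_entry n p (\<psi> x) = p x"
    and balanced: "balanced_index n k (desc_entry n p) j" and "k \<le> n"
  defines "M \<equiv> (\<Sum>i=j..n. desc_entry n p i) / real (k + 1 - j)"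
  shows "sum p {x\<in>{1..n}. j \<le> \<psi> x} = real (k + 1 - j) * M"
    and "\<forall>x\<in>{1..n}. j \<le> \<psi> x \<longrightarrow> p x \<le> M" and "\<forall>x\<in>{1..n}. \<psi> x < j \<longrightarrow> M \<le> p x"
proof -
  define r where "r = (\<Sum>i=j..n. desc_entry n p i)"
  have j: "1 \<le> j" "j \<le> k" using balanced by (simp_all add: balanced_index_def)
  then have s: "0 < real (k + 1 - j)" by simp
  have "sum p {x\<in>{1..n}. j \<le> \<psi> x} = (\<Sum>x\<in>{x\<in>{1..n}. j \<le> \<psi> x}. desc_entry n p (\<psi> x))"
    using desc by simp
  also have "\<dots> = (\<Sum>i\<in>{i\<in>{1..n}. j \<le> i}. desc_entry n p i)"
    by (rule sum.reindex_bij_betw[OF bij_betw_filter[OF \<psi>]])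
  also have "{i\<in>{1..n}. j \<le> i} = {j..n}" using j \<open>k \<le> n\<close> by auto
  finally show "sum p {x\<in>{1..n}. j \<le> \<psi> x} = real (k + 1 - j) * M" using s by (simp add: M_def)
  have bal: "\<forall>i\<in>{j..n}. real (k + 1 - j) * desc_entry n p i \<le> r"
    "\<forall>i\<in>{1..<j}. r \<le> real (k + 1 - j) * desc_entry n p i"
    using balanced unfolding balanced_index_def r_def by blast+
  show "\<forall>x\<in>{1..n}. j \<le> \<psi> x \<longrightarrow> p x \<le> M"
  proof (intro ballI impI)
    fix x assume "x \<in> {1..n}" "j \<le> \<psi> x"
    then have "\<psi> x \<in> {j..n}" using bij_betw_apply[OF \<psi>, of x] by auto
    then have "real (k + 1 - j) * p x \<le> r" using bal(1) desc \<open>x \<in> {1..n}\<close> by metis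
    then show "p x \<le> M" using s by (simp add: M_def r_def field_simps)
  qed
  show "\<forall>x\<in>{1..n}. \<psi> x < j \<longrightarrow> M \<le> p x"
  proof (intro ballI impI)
    fix x assume "x \<in> {1..n}" "\<psi> x < j"
    then have "\<psi> x \<in> {1..<j}" using bij_betw_apply[OF \<psi>, of x] by auto
    then have "r \<le> real (k + 1 - j) * p x" using bal(2) desc \<open>x \<in> {1..n}\<close> by metis
    then show "M \<le> p x" using s by (simp add: M_def r_def field_simps)
  qed
qed

\<comment> \<open>In the column of output y, every input of the block fst (Fs ! y) has joint probability
  snd (Fs ! y), and the inputs of rank below j have joint probabilities proportional to p.\<close>
definition block_channel ::
  "(nat \<Rightarrow> nat) \<Rightarrow> nat \<Rightarrow> real \<Rightarrow> (nat set \<times> real) list \<Rightarrow> (nat \<Rightarrow> real) \<Rightarrow> nat \<Rightarrow> nat \<Rightarrow> real" where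
  "block_channel \<psi> j M Fs p x y =
     (if y < length Fs then
        if \<psi> x < j then snd (Fs ! y) / M
        else if x \<in> fst (Fs ! y) then snd (Fs ! y) / p x else 0
      else 0)"

lemma block_channel_row_sum:
  assumes "0 < p x" "0 < M" "total_weight Fs = M" "j \<le> \<psi> x \<Longrightarrow> coverage Fs x = p x"
  shows "(\<Sum>y<length Fs. block_channel \<psi> j M Fs p x y) = 1"
proof (cases "\<psi> x < j")
  case True
  have "(\<Sum>y<length Fs. block_channel \<psi> j M Fs p x y) = (\<Sum>y<length Fs. snd (Fs ! y)) / M"
    using True by (simp add: block_channel_def sum_divide_distrib)
  also have "(\<Sum>y<length Fs. snd (Fs ! y)) = total_weight Fs"
    by (simp add: total_weight_def sum_list_sum_nth atLeast0LessThan)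
  finally show ?thesis using assms by simp
next
  case False
  have "(\<Sum>y<length Fs. block_channel \<psi> j M Fs p x y)
      = (\<Sum>y<length Fs. (if x \<in> fst (Fs ! y) then snd (Fs ! y) else 0) / p x)"
    using False by (intro sum.cong) (auto simp: block_channel_def)
  also have "\<dots> = (\<Sum>y<length Fs. if x \<in> fst (Fs ! y) then snd (Fs ! y) else 0) / p x"
    by (rule sum_divide_distrib[symmetric])
  also have "(\<Sum>y<length Fs. if x \<in> fst (Fs ! y) then snd (Fs ! y) else 0) = coverage Fs x"
    by (simp add: coverage_def sum_list_sum_nth atLeast0LessThan)
  finally show ?thesis using assms False by simp
qed

lemma block_channel_feasible:
  assumes \<psi>: "bij_betw \<psi> {1..n} {1..n}" and j: "1 \<le> j" "j \<le> k" "k \<le> n"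
    and p: "\<forall>x\<in>{1..n}. 0 < p x" and M: "0 < M"
    and Fs: "\<forall>F\<in>set Fs. fst F \<subseteq> {x\<in>{1..n}. j \<le> \<psi> x} \<and> card (fst F) = k + 1 - j \<and> 0 \<le> snd F"
    and cover: "\<forall>x\<in>{1..n}. j \<le> \<psi> x \<longrightarrow> coverage Fs x = p x" and total: "total_weight Fs = M"
  shows "feasible n k (block_channel \<psi> j M Fs p)"
proof -
  let ?W = "block_channel \<psi> j M Fs p"
  have block: "fst (Fs ! y) \<subseteq> {x\<in>{1..n}. j \<le> \<psi> x}" "card (fst (Fs ! y)) = k + 1 - j"
    "0 \<le> snd (Fs ! y)" if "y < length Fs" for y
    using Fs nth_mem[OF that] by blast+
  have "\<forall>y. 0 \<le> ?W x y" if "x \<in> {1..n}" for x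
  proof
    fix y
    have "0 < p x" using p that by simp
    then show "0 \<le> ?W x y" using block(3)[of y] M by (simp add: block_channel_def)
  qed
  moreover have "((\<lambda>y. ?W x y) has_sum 1) UNIV" if "x \<in> {1..n}" for x
  proof (rule has_sum_finite_neutralI[of "{..<length Fs}"])
    show "1 = (\<Sum>y<length Fs. ?W x y)"
      using that p M total cover by (intro block_channel_row_sum[symmetric]) auto
  qed (auto simp: block_channel_def)
  moreover have "card (preimage n ?W y) \<le> k" for y
  proof (cases "y < length Fs")
    case True
    have "card {x\<in>{1..n}. \<psi> x < j} = card {i\<in>{1..n}. i < j}"
      by (rule bij_betw_same_card[OF bij_betw_filter[OF \<psi>]])
    also have "{i\<in>{1..n}. i < j} = {1..<j}" using j by auto
    finally have card_head: "card {x\<in>{1..n}. \<psi> x < j} = j - 1" by simp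
    have "preimage n ?W y \<subseteq> {x\<in>{1..n}. \<psi> x < j} \<union> fst (Fs ! y)"
      using True by (auto simp: preimage_def block_channel_def)
    then have "card (preimage n ?W y) \<le> card ({x\<in>{1..n}. \<psi> x < j} \<union> fst (Fs ! y))"
      by (rule card_mono[rotated]) (use block(1)[OF True] in \<open>auto intro: finite_subset\<close>)
    also have "\<dots> \<le> card {x\<in>{1..n}. \<psi> x < j} + card (fst (Fs ! y))"
      by (rule card_Un_le)
    finally show ?thesis using card_head block(2)[OF True] j by simp
  qed (simp add: preimage_def block_channel_def)
  ultimately show ?thesis by (simp add: feasible_def is_channel_def)
qed

lemma guesswork_block_channel_column:
  assumes \<psi>: "is_sorting_rank n p \<psi>" and j: "1 \<le> j" "j \<le> k" "k \<le> n"
    and p: "\<forall>x\<in>{1..n}. 0 < p x" and M: "0 < M" and head: "\<forall>x\<in>{1..n}. \<psi> x < j \<longrightarrow> M \<le> p x"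
    and Fs: "\<forall>F\<in>set Fs. fst F \<subseteq> {x\<in>{1..n}. j \<le> \<psi> x} \<and> card (fst F) = k + 1 - j \<and> 0 \<le> snd F"
    and y: "y < length Fs"
  shows "guesswork n (\<lambda>x. p x * block_channel \<psi> j M Fs p x y)
       = (\<Sum>x=1..n. bound_weight k j (\<psi> x) * (p x * block_channel \<psi> j M Fs p x y))"
proof -
  define S where "S = fst (Fs ! y)"
  define \<mu> where "\<mu> = snd (Fs ! y)"
  have S: "S \<subseteq> {x\<in>{1..n}. j \<le> \<psi> x}" "card S = k + 1 - j" and "0 \<le> \<mu>"
    using Fs nth_mem[OF y] by (auto simp: S_def \<mu>_def)
  have col: "p x * block_channel \<psi> j M Fs p x y
      = (if \<psi> x < j then p x * \<mu> / M else if x \<in> S then \<mu> else 0)" if "x \<in> {1..n}" for x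
  proof -
    have "0 < p x" using p that by blast
    then have "p x \<noteq> 0" by simp
    then show ?thesis using y by (simp add: block_channel_def S_def \<mu>_def)
  qed
  show ?thesis
  proof (rule guesswork_eq_bound_weight_sum[OF _ j S])
    show "bij_betw \<psi> {1..n} {1..n}" using \<psi> by (simp add: is_sorting_rank_def)
    show "\<forall>x\<in>{1..n}. \<forall>x'\<in>{1..n}. \<psi> x < \<psi> x' \<longrightarrow> \<psi> x' < j \<longrightarrow>
        p x' * block_channel \<psi> j M Fs p x' y \<le> p x * block_channel \<psi> j M Fs p x y"
      using \<psi> M \<open>0 \<le> \<mu>\<close> col
      by (auto simp: is_sorting_rank_def divide_right_mono mult_right_mono)
    show "\<forall>x\<in>{1..n}. \<psi> x < j \<longrightarrow> \<mu> \<le> p x * block_channel \<psi> j M Fs p x y"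
    proof (intro ballI impI)
      fix x assume "x \<in> {1..n}" "\<psi> x < j"
      then have "M * \<mu> \<le> p x * \<mu>" using head \<open>0 \<le> \<mu>\<close> by (simp add: mult_right_mono)
      then show "\<mu> \<le> p x * block_channel \<psi> j M Fs p x y"
        using col \<open>x \<in> {1..n}\<close> \<open>\<psi> x < j\<close> M by (simp add: field_simps)
    qed
    show "\<forall>x\<in>S. p x * block_channel \<psi> j M Fs p x y = \<mu>" using col S by auto
    show "\<forall>x\<in>{1..n}. j \<le> \<psi> x \<longrightarrow> x \<notin> S \<longrightarrow> p x * block_channel \<psi> j M Fs p x y = 0"
      using col by auto
  qed (rule \<open>0 \<le> \<mu>\<close>)
qed

lemma cond_guesswork_block_channel:
  assumes \<psi>: "is_sorting_rank n p \<psi>" and j: "1 \<le> j" "j \<le> k" "k \<le> n"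
    and p: "\<forall>x\<in>{1..n}. 0 < p x" and M: "0 < M" and head: "\<forall>x\<in>{1..n}. \<psi> x < j \<longrightarrow> M \<le> p x"
    and Fs: "\<forall>F\<in>set Fs. fst F \<subseteq> {x\<in>{1..n}. j \<le> \<psi> x} \<and> card (fst F) = k + 1 - j \<and> 0 \<le> snd F"
    and cover: "\<forall>x\<in>{1..n}. j \<le> \<psi> x \<longrightarrow> coverage Fs x = p x" and total: "total_weight Fs = M"
  shows "cond_guesswork n p (block_channel \<psi> j M Fs p) = (\<Sum>x=1..n. bound_weight k j (\<psi> x) * p x)"
proof -
  let ?W = "block_channel \<psi> j M Fs p"
  have "bij_betw \<psi> {1..n} {1..n}" using \<psi> by (simp add: is_sorting_rank_def)
  then have "feasible n k ?W" by (rule block_channel_feasible[OF _ j p M Fs cover total])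
  then have "cond_guesswork n p ?W = (\<Sum>\<^sub>\<infinity>y. guesswork n (\<lambda>x. p x * ?W x y))"
    using p by (intro cond_guesswork_eq_infsum) (simp add: feasible_def)
  also have "\<dots> = (\<Sum>y<length Fs. guesswork n (\<lambda>x. p x * ?W x y))"
  proof (rule infsumI, rule has_sum_finite_neutralI[of "{..<length Fs}"])
    show "guesswork n (\<lambda>x. p x * ?W x y) = 0" if "y \<in> UNIV - {..<length Fs}" for y
      using that by (intro guesswork_eq_0) (simp add: block_channel_def)
  qed auto
  also have "\<dots> = (\<Sum>y<length Fs. \<Sum>x=1..n. bound_weight k j (\<psi> x) * (p x * ?W x y))"
    by (intro sum.cong refl guesswork_block_channel_column[OF \<psi> j p M head Fs]) simp
  also have "\<dots> = (\<Sum>x=1..n. bound_weight k j (\<psi> x) * p x * (\<Sum>y<length Fs. ?W x y))"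
    by (subst sum.swap) (simp add: sum_distrib_left mult.assoc)
  also have "\<dots> = (\<Sum>x=1..n. bound_weight k j (\<psi> x) * p x)"
    using p M total cover by (intro sum.cong refl) (simp add: block_channel_row_sum)
  finally show ?thesis .
qed

lemma exists_channel_attaining_bound:
  assumes \<psi>: "is_sorting_rank n p \<psi>" and desc: "\<forall>x\<in>{1..n}. desc_entry n p (\<psi> x) = p x"
    and p: "\<forall>x\<in>{1..n}. 0 < p x" and "k \<le> n" and balanced: "balanced_index n k (desc_entry n p) j"
  shows "\<exists>W. feasible n k W \<and> cond_guesswork n p W = (\<Sum>x=1..n. bound_weight k j (\<psi> x) * p x)"
proof -
  have \<psi>_bij: "bij_betw \<psi> {1..n} {1..n}" using \<psi> by (simp add: is_sorting_rank_def)
  have j: "1 \<le> j" "j \<le> k" "k \<le> n" using balanced \<open>k \<le> n\<close> by (simp_all add: balanced_index_def)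
  define R where "R = {x\<in>{1..n}. j \<le> \<psi> x}"
  define M where "M = (\<Sum>i=j..n. desc_entry n p i) / real (k + 1 - j)"
  note share = balanced_index_share[OF \<psi>_bij desc balanced \<open>k \<le> n\<close>, folded M_def R_def]
  obtain x where "x \<in> {1..n}" "\<psi> x = n"
    using bij_betw_iff_bijections[THEN iffD1, OF \<psi>_bij] j by force
  then have "p x \<le> M" "0 < p x" using share(2) p j by auto
  then have "0 < M" by linarith
  obtain Fs where "\<forall>F\<in>set Fs. fst F \<subseteq> R \<and> card (fst F) = k + 1 - j \<and> 0 \<le> snd F"
    and "\<forall>x\<in>R. coverage Fs x = p x" and total: "total_weight Fs = M"
    using hypersimplex_decomposition[of R p M "k + 1 - j"] p share(1,2) \<open>0 < M\<close>
    by (auto simp: R_def less_imp_le)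
  then have "\<forall>F\<in>set Fs. fst F \<subseteq> {x\<in>{1..n}. j \<le> \<psi> x} \<and> card (fst F) = k + 1 - j \<and> 0 \<le> snd F"
    and "\<forall>x\<in>{1..n}. j \<le> \<psi> x \<longrightarrow> coverage Fs x = p x"
    by (simp_all add: R_def)
  then show ?thesis
    using block_channel_feasible[OF \<psi>_bij j p \<open>0 < M\<close> _ _ total]
      cond_guesswork_block_channel[OF \<psi> j p \<open>0 < M\<close> share(3) _ _ total] by blast
qed

theorem corollary3:
  fixes n k :: nat and p :: "nat \<Rightarrow> real"
  assumes "0 < k" and "k < n"
    and "\<forall>x\<in>{1..n}. p x > 0"
    and "(\<Sum>x=1..n. p x) = 1"
  shows "(\<exists>W. feasible n k W \<and> cond_guesswork n p W = Min (bound_term n k p ` {1..k}))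
       \<and> (\<forall>W. feasible n k W \<longrightarrow> cond_guesswork n p W \<le> Min (bound_term n k p ` {1..k}))"
proof -
  obtain \<psi> where \<psi>: "is_sorting_rank n p \<psi>" and desc: "\<forall>x\<in>{1..n}. desc_entry n p (\<psi> x) = p x"
    using sorting_rank_exists[of n p] by blast
  have \<psi>_bij: "bij_betw \<psi> {1..n} {1..n}" using \<psi> by (simp add: is_sorting_rank_def)
  obtain j where j: "balanced_index n k (desc_entry n p) j"
    using balanced_index_of_prior_exists[OF assms(1) less_imp_le[OF assms(2)] assms(3)] by blast
  then have "j \<in> {1..k}" by (simp add: balanced_index_def)
  have "(\<Sum>x=1..n. bound_weight k j (\<psi> x) * p x) = bound_term n k p j"
    using \<open>j \<in> {1..k}\<close> assms(2) by (intro sum_bound_weight_eq_bound_term[OF \<psi>_bij desc assms(4)]) auto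
  then obtain W where W: "feasible n k W" and attained: "cond_guesswork n p W = bound_term n k p j"
    using exists_channel_attaining_bound[OF \<psi> desc assms(3) _ j] assms(2) by auto
  have upper: "cond_guesswork n p W' \<le> Min (bound_term n k p ` {1..k})" if W': "feasible n k W'" for W'
  proof -
    have "cond_guesswork n p W' \<le> bound_term n k p j'" if "j' \<in> {1..k}" for j'
      using that assms(2) by (intro cond_guesswork_le_bound_term[OF \<psi>_bij desc assms(4) _ _ _ assms(3) W']) auto
    then show ?thesis using assms(1) by simp
  qed
  moreover have "Min (bound_term n k p ` {1..k}) \<le> bound_term n k p j" using \<open>j \<in> {1..k}\<close> by simp
  ultimately show ?thesis using W attained by (metis order_antisym)
qed

end
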